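(* Let $\Gamma$ be a telescopic numerical semigroup minimally generated by $r_0<\cdots<r_h$ with $h\ge 2$, let $c=\mathrm c(\Gamma)$ and $d_h=\gcd(r_0,\ldots,r_{h-1})$. Then $$2^{h+1}-1\le r_h\le \frac{c}{d_h-1}-\big((h-2)2^h+2\big)\frac{d_h}{d_h-1}+1\le c-(h-2)2^h-1.$$
   Context: A numerical semigroup is a submonoid of $(\mathbb N,+)$ with finite complement in $\mathbb N$; it has a unique minimal generating system. $\mathrm F(\Gamma)$ is the largest integer not in $\Gamma$, and $\mathrm c(\Gamma)=\mathrm F(\Gamma)+1$. $\langle X\rangle$ is the submonoid generated by $X$. For an arrangement $(r_0,\ldots,r_h)$ of the minimal generators, set $d_k=\gcd(r_0,\ldots,r_{k-1})$. A set $A$ of positive integers with nontrivial partition $A=A_1\cup A_2$ is the gluing of $A_1$ and $A_2$ if $\mathrm{lcm}(\gcd A_1,\gcd A_2)\in\langle A_1\rangle\cap\langle A_2\rangle$. $\Gamma$ is free for $(r_0,\ldots,r_h)$ if $h=0$, or $h\ge1$, $\{r_0,\ldots,r_h\}$ is the gluing of $\{r_0,\ldots,r_{h-1}\}$ and $\{r_h\}$, and $\langle r_0/d_h,\ldots,r_{h-1}/d_h\rangle$ is free for $(r_0/d_h,\ldots,r_{h-1}/d_h)$. $\Gamma$ is telescopic if it is free for the arrangement of its minimal generators in increasing order. *)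

theory Defs
  imports Complex_Main
begin

inductive_set gen :: "nat set \<Rightarrow> nat set" for X :: "nat set" where
  gen_zero: "0 \<in> gen X"
| gen_add: "x \<in> X \<Longrightarrow> y \<in> gen X \<Longrightarrow> x + y \<in> gen X"

definition numerical_semigroup :: "nat set \<Rightarrow> bool" where
  "numerical_semigroup S \<longleftrightarrow> 0 \<in> S \<and> (\<forall>x\<in>S. \<forall>y\<in>S. x + y \<in> S) \<and> finite (UNIV - S)"

definition min_gens :: "nat set \<Rightarrow> nat set" where
  "min_gens S = {x \<in> S. x \<noteq> 0 \<and> \<not> (\<exists>a\<in>S. \<exists>b\<in>S. a \<noteq> 0 \<and> b \<noteq> 0 \<and> x = a + b)}"

definition frobenius :: "nat set \<Rightarrow> int" where
  "frobenius S = (if UNIV - S = {} then -1 else int (Max (UNIV - S)))"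

definition conductor :: "nat set \<Rightarrow> int" where
  "conductor S = frobenius S + 1"

definition is_gluing :: "nat set \<Rightarrow> nat set \<Rightarrow> nat set \<Rightarrow> bool" where
  "is_gluing A A1 A2 \<longleftrightarrow> A = A1 \<union> A2 \<and> A1 \<inter> A2 = {} \<and> A1 \<noteq> {} \<and> A2 \<noteq> {} \<and>
     lcm (Gcd A1) (Gcd A2) \<in> gen A1 \<inter> gen A2"

function free_arr :: "nat list \<Rightarrow> bool" where
  "free_arr rs = (if length rs \<le> 1 then length rs = 1 else
     (let A = butlast rs; r = last rs; d = Gcd (set A) in
        is_gluing (set rs) (set A) {r} \<and> free_arr (map (\<lambda>x. x div d) A)))"
  by pat_completeness auto
termination by (relation "measure length") auto

definition telescopic :: "nat set \<Rightarrow> bool" where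
  "telescopic S \<longleftrightarrow> numerical_semigroup S \<and> free_arr (sorted_list_of_set (min_gens S))"

end

theory Submission
  imports Defs
begin

text \<open>Peeling off the last gluing writes the increasing generators as \<open>d \<cdot> A @ [r]\<close> with
  \<open>A\<close> again telescopic, \<open>d = d\<^sub>h \<ge> 2\<close>, \<open>gcd d r = 1\<close> and \<open>r > d \<cdot> max A\<close>. Hence every
  generator is more than twice its predecessor, giving \<open>r\<^sub>h \<ge> 2\<^bsup>h+1\<^esup> - 1\<close>. The number
  \<open>N = d N(A) + (d - 1) r\<close> is a gap (a representation of it would, by coprimality, descend to
  one of \<open>N(A)\<close>), and the same doubling gives \<open>N(A) \<ge> (h - 2) 2\<^sup>h + 1\<close>. So
  \<open>c \<ge> d ((h - 2) 2\<^sup>h + 1) + (d - 1) r\<^sub>h + 1\<close>, which rearranges to both inequalities.\<close>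

declare free_arr.simps [simp del]

lemma gen_base: "x \<in> X \<Longrightarrow> x \<in> gen X"
  using gen_add[of x X 0] gen_zero by simp

lemma gen_add_closed: "x \<in> gen X \<Longrightarrow> y \<in> gen X \<Longrightarrow> x + y \<in> gen X"
  by (induction x rule: gen.induct) (auto simp: add.assoc intro: gen_add)

lemma gen_mult_closed: "x \<in> gen X \<Longrightarrow> t * x \<in> gen X"
  by (induction t) (auto intro: gen_add_closed gen_zero)

lemma gen_empty: "gen {} = {0}"
  by (auto elim: gen.cases intro: gen_zero)

lemma gen_insertE:
  assumes "z \<in> gen (insert r X)"
  obtains a t where "a \<in> gen X" "z = a + t * r"
  using assms
proof (induction z arbitrary: thesis rule: gen.induct)
  case gen_zero
  then show ?case using gen.gen_zero by (metis add_0 mult_0)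
next
  case (gen_add x y)
  then obtain a t where a: "a \<in> gen X" "y = a + t * r" by blast
  show ?case
  proof (cases "x = r")
    case True
    then show ?thesis using a gen_add.prems[of a "Suc t"] by simp
  next
    case False
    then have "x + a \<in> gen X" using gen_add a by (auto intro: gen.gen_add)
    then show ?thesis using a gen_add.prems[of "x + a" t] by simp
  qed
qed

lemma gen_image_mult: "gen ((*) d ` X) = (*) d ` gen X"
proof
  show "gen ((*) d ` X) \<subseteq> (*) d ` gen X"
  proof
    fix z assume "z \<in> gen ((*) d ` X)"
    then show "z \<in> (*) d ` gen X"
    proof (induction z rule: gen.induct)
      case gen_zero
      then show ?case using gen.gen_zero by force
    next
      case (gen_add x y)
      then obtain u a where "u \<in> X" "x = d * u" "a \<in> gen X" "y = d * a" by blast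
      then have "d * (u + a) \<in> (*) d ` gen X" by (auto intro: gen.gen_add)
      then show ?case using \<open>x = d * u\<close> \<open>y = d * a\<close> by (simp add: distrib_left)
    qed
  qed
next
  show "(*) d ` gen X \<subseteq> gen ((*) d ` X)"
  proof
    fix z assume "z \<in> (*) d ` gen X"
    then obtain x where "x \<in> gen X" "z = d * x" by blast
    then show "z \<in> gen ((*) d ` X)"
      by (induction x arbitrary: z rule: gen.induct) (auto simp: distrib_left intro: gen.intros)
  qed
qed

lemma mult_mem_gen_image_mult_iff:
  assumes "d > 0"
  shows "d * x \<in> gen ((*) d ` X) \<longleftrightarrow> x \<in> gen X"
  using assms by (auto simp: gen_image_mult)

lemma gen_subset_numerical_semigroup:
  assumes "numerical_semigroup S" "X \<subseteq> S"
  shows "gen X \<subseteq> S"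
proof
  fix z assume "z \<in> gen X"
  then show "z \<in> S"
    using assms by (induction z rule: gen.induct) (auto simp: numerical_semigroup_def)
qed

lemma dvd_gen: "z \<in> gen X \<Longrightarrow> (\<And>x. x \<in> X \<Longrightarrow> g dvd x) \<Longrightarrow> g dvd (z :: nat)"
  by (induction z rule: gen.induct) auto

definition gen_independent :: "nat list \<Rightarrow> bool" where
  "gen_independent rs \<longleftrightarrow> (\<forall>k<length rs. rs ! k \<notin> gen (set (take k rs)))"

lemma gen_independent_appendD:
  assumes "gen_independent (xs @ ys)"
  shows "gen_independent xs"
  unfolding gen_independent_def
proof (intro allI impI)
  fix k assume "k < length xs"
  then show "xs ! k \<notin> gen (set (take k xs))"
    using assms[unfolded gen_independent_def, rule_format, of k] by (simp add: nth_append)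
qed

lemma gen_independent_map_mult_iff:
  assumes "d > 0"
  shows "gen_independent (map ((*) d) xs) \<longleftrightarrow> gen_independent xs"
  using mult_mem_gen_image_mult_iff[OF assms]
  by (simp add: gen_independent_def take_map)

lemma gen_independent_nth_0: "gen_independent rs \<Longrightarrow> rs \<noteq> [] \<Longrightarrow> rs ! 0 \<noteq> 0"
  by (auto simp: gen_independent_def gen_empty dest: spec[of _ 0])

definition telescopic_seq :: "nat list \<Rightarrow> bool" where
  "telescopic_seq rs \<longleftrightarrow> free_arr rs \<and> sorted_wrt (<) rs \<and> Gcd (set rs) = 1 \<and> gen_independent rs"

lemma telescopic_seq_Nil [simp]: "\<not> telescopic_seq []"
  by (simp add: telescopic_seq_def free_arr.simps)

lemma telescopic_seq_single:
  assumes "telescopic_seq rs" "length rs \<le> 1"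
  shows "rs = [1]"
proof -
  have "length rs = 1"
    using assms by (simp add: telescopic_seq_def free_arr.simps)
  then obtain x where "rs = [x]" by (auto simp: length_Suc_conv)
  then show ?thesis using assms(1) by (simp add: telescopic_seq_def)
qed

lemma telescopic_seq_snocE:
  assumes tel: "telescopic_seq rs" and len: "2 \<le> length rs"
  obtains A d r where "rs = map ((*) d) A @ [r]" "telescopic_seq A" "2 \<le> d" "coprime d r"
    "r \<in> gen (set A)" "\<forall>x\<in>set A. d * x < r"
proof -
  obtain B r where rs: "rs = B @ [r]" using len by (cases rs rule: rev_cases) auto
  with len have "B \<noteq> []" by auto
  define d where "d = Gcd (set B)"
  define A where "A = map (\<lambda>x. x div d) B"
  have free: "free_arr rs" and sorted: "sorted_wrt (<) rs" and Gcd: "Gcd (set rs) = 1"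
    and indep: "gen_independent rs"
    using tel by (auto simp: telescopic_seq_def)
  have "free_arr rs \<longleftrightarrow> is_gluing (set rs) (set B) {r} \<and> free_arr A"
    using \<open>B \<noteq> []\<close> unfolding A_def d_def rs by (subst free_arr.simps) (simp add: Let_def)
  with free have glue: "is_gluing (set rs) (set B) {r}" and free_A: "free_arr A" by auto
  have B: "B = map ((*) d) A"
    unfolding A_def d_def by (simp add: map_idI)
  have indep_B: "gen_independent B"
    using indep rs gen_independent_appendD by blast
  have "d > 0"
  proof -
    have "B ! 0 \<noteq> 0" using gen_independent_nth_0[OF indep_B \<open>B \<noteq> []\<close>] .
    moreover have "d dvd B ! 0" using \<open>B \<noteq> []\<close> unfolding d_def by simp
    ultimately show ?thesis by (cases "d = 0") auto
  qed
  have lcm: "lcm d r \<in> gen (set B)"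
    using glue unfolding is_gluing_def d_def by simp
  have coprime: "coprime d r"
    using Gcd unfolding rs d_def by (simp add: coprime_iff_gcd_eq_1 gcd.commute)
  have "d * r \<in> gen ((*) d ` set A)"
    using lcm coprime B by (simp add: lcm_coprime)
  then have r_gen: "r \<in> gen (set A)"
    using mult_mem_gen_image_mult_iff[OF \<open>d > 0\<close>] by blast
  have "d \<noteq> 1"
  proof
    assume "d = 1"
    then have "rs ! length B \<in> gen (set (take (length B) rs))"
      using lcm rs by simp
    then show False
      using indep rs unfolding gen_independent_def by (metis length_append_singleton lessI)
  qed
  with \<open>d > 0\<close> have "2 \<le> d" by simp
  have "sorted_wrt (<) A"
    using sorted unfolding rs B
    by (auto simp: sorted_wrt_append sorted_wrt_map elim: sorted_wrt_mono_rel[rotated])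
  moreover have "Gcd (set A) = 1"
    using \<open>d > 0\<close> d_def unfolding B by (simp add: Gcd_mult)
  moreover have "gen_independent A"
    using indep_B gen_independent_map_mult_iff[OF \<open>d > 0\<close>] B by simp
  ultimately have "telescopic_seq A"
    using free_A by (simp add: telescopic_seq_def)
  moreover have "\<forall>x\<in>set A. d * x < r"
    using sorted unfolding rs B by (simp add: sorted_wrt_append)
  ultimately show thesis
    using that rs B \<open>2 \<le> d\<close> coprime r_gen by blast
qed

lemma telescopic_seq_induct [consumes 1, case_names single snoc]:
  assumes "telescopic_seq rs"
    and single: "P [1]"
    and snoc: "\<And>A d r. telescopic_seq A \<Longrightarrow> P A \<Longrightarrow> 2 \<le> d \<Longrightarrow> coprime d r \<Longrightarrow>
      r \<in> gen (set A) \<Longrightarrow> \<forall>x\<in>set A. d * x < r \<Longrightarrow> telescopic_seq (map ((*) d) A @ [r]) \<Longrightarrow>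
      P (map ((*) d) A @ [r])"
  shows "P rs"
  using assms(1)
proof (induction "length rs" arbitrary: rs rule: less_induct)
  case less
  show ?case
  proof (cases "length rs \<le> 1")
    case True
    then show ?thesis using telescopic_seq_single less.prems single by blast
  next
    case False
    then have "2 \<le> length rs" by simp
    then obtain A d r where rs: "rs = map ((*) d) A @ [r]" and A: "telescopic_seq A" "2 \<le> d"
      "coprime d r" "r \<in> gen (set A)" "\<forall>x\<in>set A. d * x < r"
      by (rule telescopic_seq_snocE[OF less.prems])
    have "P A" using less.hyps[OF _ A(1)] rs by simp
    then show ?thesis using snoc[OF A(1) _ A(2-5)] rs less.prems by blast
  qed
qed

lemma telescopic_seq_last_lower_bound: "telescopic_seq rs \<Longrightarrow> 2 ^ length rs \<le> last rs + 1"
proof (induction rs rule: telescopic_seq_induct)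
  case single
  then show ?case by simp
next
  case (snoc A d r)
  have "A \<noteq> []" using \<open>telescopic_seq A\<close> by auto
  then have "d * last A < r" using \<open>\<forall>x\<in>set A. d * x < r\<close> by simp
  moreover have "2 * last A \<le> d * last A" using \<open>2 \<le> d\<close> by (rule mult_le_mono1)
  ultimately have "2 * 2 ^ length A \<le> r + 1" using snoc.IH by linarith
  then show ?case by simp
qed

text \<open>For a free arrangement this is the Frobenius number (recursion
  \<open>F = d\<^sub>h F' + (d\<^sub>h - 1) r\<^sub>h\<close> along the last gluing); only the fact that it is a gap is needed.\<close>

function free_frobenius :: "nat list \<Rightarrow> int" where
  "free_frobenius rs = (if length rs \<le> 1 then -1 else
     (let A = butlast rs; r = last rs; d = Gcd (set A) in
        int d * free_frobenius (map (\<lambda>x. x div d) A) + (int d - 1) * int r))"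
  by pat_completeness auto
termination by (relation "measure length") auto

declare free_frobenius.simps [simp del]

lemma free_frobenius_single: "free_frobenius [x] = -1"
  by (simp add: free_frobenius.simps)

lemma free_frobenius_snoc:
  assumes "d > 0" "A \<noteq> []" "Gcd (set A) = 1"
  shows "free_frobenius (map ((*) d) A @ [r]) = int d * free_frobenius A + (int d - 1) * int r"
proof -
  have "Gcd (set (map ((*) d) A)) = d" using assms by (simp add: Gcd_mult)
  then show ?thesis
    using assms by (subst free_frobenius.simps) (simp add: Let_def comp_def)
qed

lemma free_frobenius_notin_gen:
  "telescopic_seq rs \<Longrightarrow> free_frobenius rs = int m \<Longrightarrow> m \<notin> gen (set rs)"
proof (induction rs arbitrary: m rule: telescopic_seq_induct)
  case single
  then show ?case by (simp add: free_frobenius_single)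
next
  case (snoc A d r)
  define N where "N = free_frobenius A"
  have "A \<noteq> []" using \<open>telescopic_seq A\<close> by auto
  then have m: "int m = int d * N + (int d - 1) * int r"
    using snoc.prems \<open>telescopic_seq A\<close> \<open>2 \<le> d\<close> unfolding N_def
    by (simp add: free_frobenius_snoc telescopic_seq_def)
  show ?case
  proof
    assume "m \<in> gen (set (map ((*) d) A @ [r]))"
    then have "m \<in> gen (insert r ((*) d ` set A))" by simp
    then obtain a t where a: "a \<in> gen ((*) d ` set A)" and "m = a + t * r"
      by (rule gen_insertE)
    from a obtain a' where a': "a' \<in> gen (set A)" and "a = d * a'"
      by (auto simp: gen_image_mult)
    with m \<open>m = a + t * r\<close> have eq: "int d * (N + int r - int a') = (int t + 1) * int r"
      by (simp add: algebra_simps)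
    then have "int d dvd (int t + 1) * int r" by (metis dvd_triv_left)
    moreover have "coprime (int d) (int r)" using \<open>coprime d r\<close> by simp
    ultimately obtain q where q: "int t + 1 = int d * q"
      using coprime_dvd_mult_left_iff by blast
    have "int d > 0" using \<open>2 \<le> d\<close> by simp
    moreover have "0 < int d * q" using q by linarith
    ultimately have "q > 0" by (simp add: zero_less_mult_iff)
    have "int d * (N + int r - int a') = int d * (q * int r)"
      using eq unfolding q by (simp add: mult.assoc)
    with \<open>int d > 0\<close> have "N + int r - int a' = q * int r" by simp
    then have "N = int a' + (q - 1) * int r" by (simp add: algebra_simps)
    with \<open>q > 0\<close> have "N = int (a' + nat (q - 1) * r)" by simp
    moreover have "a' + nat (q - 1) * r \<in> gen (set A)"
      using a' \<open>r \<in> gen (set A)\<close> by (intro gen_add_closed gen_mult_closed)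
    ultimately show False using snoc.IH[folded N_def] by blast
  qed
qed

lemma free_frobenius_lower_bound:
  "telescopic_seq rs \<Longrightarrow> 2 \<le> length rs \<Longrightarrow>
    (int (length rs) - 2) * 2 ^ length rs + 1 \<le> free_frobenius rs"
proof (induction rs rule: telescopic_seq_induct)
  case single
  then show ?case by simp
next
  case (snoc A d r)
  define n where "n = length A"
  define N where "N = free_frobenius A"
  have "A \<noteq> []" using \<open>telescopic_seq A\<close> by auto
  then have F: "free_frobenius (map ((*) d) A @ [r]) = int d * N + (int d - 1) * int r"
    using \<open>telescopic_seq A\<close> \<open>2 \<le> d\<close> unfolding N_def by (simp add: free_frobenius_snoc telescopic_seq_def)
  have "2 * 2 ^ n \<le> r + 1"
    using telescopic_seq_last_lower_bound[OF \<open>telescopic_seq (map ((*) d) A @ [r])\<close>] unfolding n_def by simp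
  then have "int (2 * 2 ^ n) \<le> int (r + 1)" by (simp only: of_nat_le_iff)
  then have r: "2 * 2 ^ n \<le> int r + 1" by simp
  have d: "2 \<le> int d" using \<open>2 \<le> d\<close> by simp
  show ?case
  proof (cases "n = 1")
    case True
    then have "A = [1]" using telescopic_seq_single[OF \<open>telescopic_seq A\<close>] n_def by simp
    then have "N = -1" unfolding N_def by (simp add: free_frobenius_single)
    have "3 \<le> int r" using r True by simp
    then have "(int d - 1) * 3 \<le> (int d - 1) * int r" using d by (intro mult_left_mono) simp_all
    with \<open>N = -1\<close> show ?thesis using F True d unfolding n_def by simp
  next
    case False
    moreover have "n \<noteq> 0" using \<open>A \<noteq> []\<close> unfolding n_def by simp
    ultimately have "2 \<le> n" by simp
    then have IH: "(int n - 2) * 2 ^ n + 1 \<le> N"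
      using snoc.IH unfolding n_def N_def by simp
    moreover have "0 \<le> (int n - 2) * 2 ^ n" using \<open>2 \<le> n\<close> by simp
    ultimately have "2 * N \<le> int d * N" using d by (simp add: mult_right_mono)
    have "(int (Suc n) - 2) * 2 ^ Suc n + 1 = 2 * ((int n - 2) * 2 ^ n + 1) + (2 * 2 ^ n - 1)"
      by (simp add: algebra_simps)
    also have "\<dots> \<le> 2 * N + int r" using IH r by simp
    also have "\<dots> \<le> int d * N + (int d - 1) * int r"
      using \<open>2 * N \<le> int d * N\<close> mult_right_mono[of 1 "int d - 1" "int r"] d by simp
    finally show ?thesis using F unfolding n_def by simp
  qed
qed

lemma gen_min_gens:
  assumes "numerical_semigroup S"
  shows "gen (min_gens S) = S"
proof
  show "gen (min_gens S) \<subseteq> S"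
    using assms by (intro gen_subset_numerical_semigroup) (auto simp: min_gens_def)
  show "S \<subseteq> gen (min_gens S)"
  proof
    fix x assume "x \<in> S"
    then show "x \<in> gen (min_gens S)"
    proof (induction x rule: less_induct)
      case (less x)
      show ?case
      proof (cases "x = 0 \<or> x \<in> min_gens S")
        case True
        then show ?thesis by (auto intro: gen_zero gen_base)
      next
        case False
        then obtain a b where "a \<in> S" "b \<in> S" "a \<noteq> 0" "b \<noteq> 0" "x = a + b"
          using less.prems unfolding min_gens_def by blast
        then show ?thesis using less.IH by (auto intro: gen_add_closed)
      qed
    qed
  qed
qed

lemma Gcd_min_gens:
  assumes "numerical_semigroup S"
  shows "Gcd (min_gens S) = 1"
proof -
  have "finite (UNIV - S)" using assms by (simp add: numerical_semigroup_def)
  then obtain n where n: "\<And>m. n \<le> m \<Longrightarrow> m \<in> S"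
    by (metis Diff_iff UNIV_I finite_nat_set_iff_bounded_le not_less_eq_eq)
  have "Gcd (min_gens S) dvd m" if "n \<le> m" for m
    using n[OF that] gen_min_gens[OF assms] dvd_gen[of m "min_gens S"] by auto
  then have "Gcd (min_gens S) dvd n" "Gcd (min_gens S) dvd Suc n" by auto
  then have "Gcd (min_gens S) dvd 1" using dvd_add_right_iff[of _ n 1] by simp
  then show ?thesis by simp
qed

lemma min_gens_notin_gen:
  assumes "numerical_semigroup S" "x \<in> min_gens S" "Y \<subseteq> min_gens S" "x \<notin> Y"
  shows "x \<notin> gen Y"
proof
  assume "x \<in> gen Y"
  moreover have "x \<noteq> 0" using assms(2) by (simp add: min_gens_def)
  ultimately obtain y z where yz: "y \<in> Y" "z \<in> gen Y" "x = y + z"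
    by (cases rule: gen.cases) auto
  with \<open>x \<notin> Y\<close> have "z \<noteq> 0" by (metis add.right_neutral)
  have "Y \<subseteq> S" using assms(3) by (auto simp: min_gens_def)
  then have "z \<in> S" using yz(2) gen_subset_numerical_semigroup[OF assms(1)] by blast
  moreover have "y \<in> S" "y \<noteq> 0" using yz(1) assms(3) by (auto simp: min_gens_def)
  ultimately show False using assms(2) yz(3) \<open>z \<noteq> 0\<close> unfolding min_gens_def by blast
qed

lemma telescopic_seq_min_gens:
  assumes "telescopic S"
  shows "telescopic_seq (sorted_list_of_set (min_gens S))"
proof -
  let ?rs = "sorted_list_of_set (min_gens S)"
  have ns: "numerical_semigroup S" and free: "free_arr ?rs"
    using assms by (auto simp: telescopic_def)
  have "finite (min_gens S)"
    using free by (cases "finite (min_gens S)") (auto simp: free_arr.simps)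
  then have set_rs: "set ?rs = min_gens S" by simp
  have sorted: "sorted_wrt (<) ?rs" by (simp add: strict_sorted_iff)
  have "gen_independent ?rs"
    unfolding gen_independent_def
  proof (intro allI impI)
    fix k assume "k < length ?rs"
    moreover have "?rs ! k \<notin> set (take k ?rs)"
      using sorted \<open>k < length ?rs\<close> by (fastforce simp: in_set_conv_nth sorted_wrt_iff_nth_less)
    ultimately show "?rs ! k \<notin> gen (set (take k ?rs))"
      using set_rs min_gens_notin_gen[OF ns] by (metis nth_mem set_take_subset)
  qed
  then show ?thesis
    using free sorted Gcd_min_gens[OF ns] set_rs by (simp add: telescopic_seq_def)
qed

lemma gap_le_frobenius:
  assumes "numerical_semigroup S" "m \<notin> S"
  shows "int m \<le> frobenius S"
  using assms by (auto simp: frobenius_def numerical_semigroup_def)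

lemma free_frobenius_le_frobenius:
  assumes "telescopic S"
  shows "free_frobenius (sorted_list_of_set (min_gens S)) \<le> frobenius S"
proof (cases "free_frobenius (sorted_list_of_set (min_gens S)) < 0")
  case True
  then show ?thesis by (simp add: frobenius_def)
next
  case False
  then obtain m where m: "free_frobenius (sorted_list_of_set (min_gens S)) = int m"
    by (metis nonneg_int_cases not_less)
  have ns: "numerical_semigroup S" using assms by (simp add: telescopic_def)
  have tel: "telescopic_seq (sorted_list_of_set (min_gens S))"
    using telescopic_seq_min_gens[OF assms] .
  then have "finite (min_gens S)" by (cases "finite (min_gens S)") auto
  then have "m \<notin> S"
    using free_frobenius_notin_gen[OF tel m] gen_min_gens[OF ns] by simp
  then show ?thesis using m gap_le_frobenius[OF ns] by simp
qed

lemma conductor_estimates: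
  fixes c d r x :: real
  assumes "2 \<le> d" "1 \<le> r" "0 \<le> x" and c: "d * (x - 1) + (d - 1) * r + 1 \<le> c"
  shows "r \<le> c / (d - 1) - x * d / (d - 1) + 1"
    and "c / (d - 1) - x * d / (d - 1) + 1 \<le> c - x + 1"
proof -
  have "(r - 1) * (d - 1) \<le> c - x * d" using c by (simp add: algebra_simps)
  then have "r - 1 \<le> (c - x * d) / (d - 1)" using assms(1) by (simp add: pos_le_divide_eq)
  then show "r \<le> c / (d - 1) - x * d / (d - 1) + 1" by (simp add: diff_divide_distrib)
  have "0 \<le> (d - 1) * (r - 1) + x * d" using assms by simp
  with c have "0 \<le> c" by (simp add: algebra_simps)
  then have "c * 2 \<le> c * d" using assms(1) by (simp add: mult_left_mono)
  then have "c - x * d \<le> (c - x) * (d - 1)" using assms(3) by (simp add: algebra_simps)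
  then have "(c - x * d) / (d - 1) \<le> c - x" using assms(1) by (simp add: pos_divide_le_eq)
  then show "c / (d - 1) - x * d / (d - 1) + 1 \<le> c - x + 1" by (simp add: diff_divide_distrib)
qed

lemma telescopic_generator_bounds:
  assumes "telescopic S" and len: "length (sorted_list_of_set (min_gens S)) = h + 1" and "2 \<le> h"
  defines "rs \<equiv> sorted_list_of_set (min_gens S)"
  defines "d \<equiv> Gcd (set (take h rs))" and "r \<equiv> rs ! h"
  shows "2 \<le> d" and "2 ^ (h + 1) \<le> r + 1"
    and "int d * ((int h - 2) * 2 ^ h + 1) + (int d - 1) * int r + 1 \<le> conductor S"
proof -
  have tel: "telescopic_seq rs" using telescopic_seq_min_gens[OF assms(1)] rs_def by simp
  have len_rs: "length rs = h + 1" using len unfolding rs_def .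
  then have "2 \<le> length rs" using assms(3) by simp
  then obtain A d' r' where rs: "rs = map ((*) d') A @ [r']" and A: "telescopic_seq A" "2 \<le> d'"
    by (rule telescopic_seq_snocE[OF tel])
  have "length A = h" using len_rs rs by simp
  moreover have "A \<noteq> []" and "Gcd (set A) = 1" using A(1) by (auto simp: telescopic_seq_def)
  ultimately have "d = d'" and "r = r'"
    using rs unfolding d_def r_def by (simp_all add: nth_append Gcd_mult)
  then show "2 \<le> d" using A(2) by simp
  show "2 ^ (h + 1) \<le> r + 1"
    using telescopic_seq_last_lower_bound[OF tel] rs \<open>length A = h\<close> \<open>r = r'\<close> by simp
  have "int d * free_frobenius A + (int d - 1) * int r + 1 \<le> conductor S"
    using free_frobenius_le_frobenius[OF assms(1)] free_frobenius_snoc[of d' A r'] A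
      \<open>A \<noteq> []\<close> \<open>Gcd (set A) = 1\<close> \<open>d = d'\<close> \<open>r = r'\<close> rs rs_def by (auto simp: conductor_def)
  moreover have "(int h - 2) * 2 ^ h + 1 \<le> free_frobenius A"
    using free_frobenius_lower_bound[OF A(1)] \<open>length A = h\<close> assms(3) by simp
  then have "int d * ((int h - 2) * 2 ^ h + 1) \<le> int d * free_frobenius A"
    by (simp add: mult_left_mono)
  ultimately show "int d * ((int h - 2) * 2 ^ h + 1) + (int d - 1) * int r + 1 \<le> conductor S"
    by linarith
qed

theorem corollary4p3:
  fixes S :: "nat set" and h :: nat
  assumes "telescopic S"
    and "length (sorted_list_of_set (min_gens S)) = h + 1"
    and "h \<ge> 2"
  shows "let rs = sorted_list_of_set (min_gens S);
             rh = real (rs ! h);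
             d = real (Gcd (set (take h rs)));
             c = real_of_int (conductor S)
         in 2 ^ (h + 1) - 1 \<le> rh
          \<and> rh \<le> c / (d - 1) - ((real h - 2) * 2 ^ h + 2) * d / (d - 1) + 1
          \<and> c / (d - 1) - ((real h - 2) * 2 ^ h + 2) * d / (d - 1) + 1 \<le> c - (real h - 2) * 2 ^ h - 1"
proof -
  define d where "d = Gcd (set (take h (sorted_list_of_set (min_gens S))))"
  define r where "r = sorted_list_of_set (min_gens S) ! h"
  note bounds = telescopic_generator_bounds[OF assms, folded d_def r_def]
  have "real (2 ^ (h + 1)) \<le> real (r + 1)" using bounds(2) by (simp only: of_nat_le_iff)
  then have r: "2 ^ (h + 1) - 1 \<le> real r" by simp
  have "(2::real) \<le> 2 ^ (h + 1)" using power_increasing[of 1 "h + 1" "2::real"] by simp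
  with r have "1 \<le> real r" by linarith
  have "real_of_int (int d * ((int h - 2) * 2 ^ h + 1) + (int d - 1) * int r + 1)
      \<le> real_of_int (conductor S)"
    using bounds(3) by (simp only: of_int_le_iff)
  then have c: "real d * ((real h - 2) * 2 ^ h + 2 - 1) + (real d - 1) * real r + 1
      \<le> real_of_int (conductor S)" by (simp add: add.commute)
  have "0 \<le> (real h - 2) * 2 ^ h + 2" using assms(3) by simp
  with bounds(1) \<open>1 \<le> real r\<close> show ?thesis
    using conductor_estimates[OF _ _ _ c] r unfolding Let_def d_def[symmetric] r_def[symmetric]
    by (simp add: algebra_simps)
qed

end
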